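(* Assume the setting and all hypotheses of the following statement: let $M$ be a contextual MDP with finite state space $\mathcal S$, finite action space $\mathcal A$, context space $\mathcal C\subseteq\mathcal S$, discount $\gamma\in(0,1)$, rewards in $[0,1-\gamma]$, with $p_0(s\mid c)=\mathbb 1(s=c)$ and $P,R$ independent of the context; stages $\rho_0,\dots,\rho_K\in\Delta(\mathcal C)$ with $\pi_k^\star\in\arg\max_\pi V^\pi(\rho_k)$, $\pi^\star\in\arg\max_\pi V^\pi(\mathcal U(\mathcal C))$, $d^\star=d^{\pi^\star}$, and the bounded-environment, deterministic-environment and closeness conditions (with constants $D_{\max},p,C_1$) hold, so that there is a problem-dependent constant $m>0$ with $V^{\pi_{k+1}^\star}(\rho_{k+1})-V^{\pi_k^\star}(\rho_{k+1})\le m\,\mathcal W_{d^\star}(\rho_k,\rho_{k+1})$ for subsequent stages. Suppose in addition that the stages are generated by GRADIENT with interpolation factor $\Delta\alpha$, i.e. $\rho_k=\nu_{\min(k\Delta\alpha,1)}$ where $(\nu_\alpha)_{\alpha\in[0,1]}$ is a constant-speed Wasserstein geodesic (with respect to $\mathcal W_{d^\star}$) from the source distribution $\mu=\nu_0$ to the target distribution $\nu=\nu_1$. Then for subsequent stages $k,k+1$, $$V^{\pi_{k+1}^\star}(\rho_{k+1})-V^{\pi_k^\star}(\rho_{k+1})\le m\,\Delta\alpha\,\mathcal W_{d^\star}(\mu,\nu).$$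
   Context: Policies are maps $\mathcal S\to\Delta(\mathcal A)$; $V^\pi(\rho)$ is the expected discounted return starting from $s_0=c$, $c\sim\rho$. $d^\pi$ is the $\pi$-contextual-distance, which here equals the $\pi$-bisimulation metric: the unique fixed point of $\mathcal F(d)(s,t)=|R^\pi_s-R^\pi_t|+\gamma\mathcal W_d(P^\pi_s,P^\pi_t)$ with $R^\pi_s=\sum_a\pi(a\mid s)R(s,a)$, $P^\pi_s=\sum_a\pi(a\mid s)P(\cdot\mid s,a)$. $\mathcal W_d(\mu,\nu)$ is the 1-Wasserstein distance with ground cost $d$. The bounded-environment condition: for each $s$, nonzero values $d^\star(s,s')$ are $\ge1$ and $D_{\max}/2\le\max_{s'}d^\star(s,s')\le D_{\max}$. The deterministic-environment condition: transitions are deterministic and from states in $\mathsf{supp}(\rho_{k+1})\setminus\mathsf{supp}(\rho_k)$, the quantity $\min_{s'\in\mathsf{supp}(\rho_k)}d^\star(s',s_t)$ decreases by 1 with probability $p$ and increases by 1 otherwise. The closeness condition: starting from $t\in\mathsf{supp}(\rho_{k+1})\setminus\mathsf{supp}(\rho_k)$, if the trajectory enters $\mathcal C_{\mathsf s}(\rho_k,\pi_k^\star)=\{s:\sum_t\gamma^t\mathbb P(s_t=s\mid c\sim\rho_k;\pi_k^\star)>0\}$ before reaching a state at maximal $d^\star$-distance from $t$, the hitting point $s$ satisfies $\mathbb E[d^\star(s,t)]\le C_1\min_{s'\in\mathsf{supp}(\rho_k)}d^\star(s',t)$. A constant-speed geodesic satisfies $\mathcal W_{d^\star}(\nu_\alpha,\nu_\beta)=|\alpha-\beta|\,\mathcal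 W_{d^\star}(\mu,\nu)$. *)

theory Defs
  imports Complex_Main
begin

text \<open>Distributions on a finite type are nonnegative functions summing to 1.
  P s a s' is the transition probability, R s a the reward, a policy q s a is the
  probability of action a in state s.  Since p0(s|c) = 1(s=c), a context distribution
  rho is simply the initial state distribution.\<close>

definition is_dist :: "('s::finite \<Rightarrow> real) \<Rightarrow> bool" where
  "is_dist mu \<longleftrightarrow> (\<forall>s. 0 \<le> mu s) \<and> (\<Sum>s\<in>UNIV. mu s) = 1"

definition supp :: "('s \<Rightarrow> real) \<Rightarrow> 's set" where
  "supp mu = {s. mu s \<noteq> 0}"

definition is_policy :: "('s::finite \<Rightarrow> 'a::finite \<Rightarrow> real) \<Rightarrow> bool" where
  "is_policy q \<longleftrightarrow> (\<forall>s. is_dist (q s))"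

definition R_pi :: "('s \<Rightarrow> 'a::finite \<Rightarrow> real) \<Rightarrow> ('s \<Rightarrow> 'a \<Rightarrow> real) \<Rightarrow> 's \<Rightarrow> real" where
  "R_pi R q s = (\<Sum>a\<in>UNIV. q s a * R s a)"

definition P_pi :: "('s \<Rightarrow> 'a::finite \<Rightarrow> 's \<Rightarrow> real) \<Rightarrow> ('s \<Rightarrow> 'a \<Rightarrow> real) \<Rightarrow> 's \<Rightarrow> 's \<Rightarrow> real" where
  "P_pi P q s = (\<lambda>s'. \<Sum>a\<in>UNIV. q s a * P s a s')"

fun state_dist :: "('s::finite \<Rightarrow> 'a::finite \<Rightarrow> 's \<Rightarrow> real) \<Rightarrow> ('s \<Rightarrow> 'a \<Rightarrow> real)
    \<Rightarrow> ('s \<Rightarrow> real) \<Rightarrow> nat \<Rightarrow> 's \<Rightarrow> real" where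
  "state_dist P q rho 0 = rho"
| "state_dist P q rho (Suc t) = (\<lambda>s'. \<Sum>s\<in>UNIV. state_dist P q rho t s * P_pi P q s s')"

definition mdp_value :: "real \<Rightarrow> ('s::finite \<Rightarrow> 'a::finite \<Rightarrow> 's \<Rightarrow> real) \<Rightarrow> ('s \<Rightarrow> 'a \<Rightarrow> real)
    \<Rightarrow> ('s \<Rightarrow> 'a \<Rightarrow> real) \<Rightarrow> ('s \<Rightarrow> real) \<Rightarrow> real" where
  "mdp_value \<gamma> P R q rho = (\<Sum>t. \<gamma> ^ t * (\<Sum>s\<in>UNIV. state_dist P q rho t s * R_pi R q s))"

definition optimal_policy :: "real \<Rightarrow> ('s::finite \<Rightarrow> 'a::finite \<Rightarrow> 's \<Rightarrow> real) \<Rightarrow> ('s \<Rightarrow> 'a \<Rightarrow> real)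
    \<Rightarrow> ('s \<Rightarrow> real) \<Rightarrow> ('s \<Rightarrow> 'a \<Rightarrow> real) \<Rightarrow> bool" where
  "optimal_policy \<gamma> P R rho q \<longleftrightarrow> is_policy q \<and>
     (\<forall>q'. is_policy q' \<longrightarrow> mdp_value \<gamma> P R q' rho \<le> mdp_value \<gamma> P R q rho)"

definition uniform_on :: "'s set \<Rightarrow> 's \<Rightarrow> real" where
  "uniform_on C s = (if s \<in> C then 1 / real (card C) else 0)"

definition couplings :: "('s::finite \<Rightarrow> real) \<Rightarrow> ('s \<Rightarrow> real) \<Rightarrow> ('s \<Rightarrow> 's \<Rightarrow> real) set" where
  "couplings mu nu = {c. (\<forall>s t. 0 \<le> c s t) \<and> (\<forall>s. (\<Sum>t\<in>UNIV. c s t) = mu s)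
                          \<and> (\<forall>t. (\<Sum>s\<in>UNIV. c s t) = nu t)}"

definition wasserstein :: "('s::finite \<Rightarrow> 's \<Rightarrow> real) \<Rightarrow> ('s \<Rightarrow> real) \<Rightarrow> ('s \<Rightarrow> real) \<Rightarrow> real" where
  "wasserstein d mu nu = Inf ((\<lambda>c. \<Sum>s\<in>UNIV. \<Sum>t\<in>UNIV. c s t * d s t) ` couplings mu nu)"

definition bisim_fixed_point :: "real \<Rightarrow> ('s::finite \<Rightarrow> 'a::finite \<Rightarrow> 's \<Rightarrow> real) \<Rightarrow> ('s \<Rightarrow> 'a \<Rightarrow> real)
    \<Rightarrow> ('s \<Rightarrow> 'a \<Rightarrow> real) \<Rightarrow> ('s \<Rightarrow> 's \<Rightarrow> real) \<Rightarrow> bool" where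
  "bisim_fixed_point \<gamma> P R q d \<longleftrightarrow> (\<forall>s t. d s t =
      \<bar>R_pi R q s - R_pi R q t\<bar> + \<gamma> * wasserstein d (P_pi P q s) (P_pi P q t))"

definition bisim_metric :: "real \<Rightarrow> ('s::finite \<Rightarrow> 'a::finite \<Rightarrow> 's \<Rightarrow> real) \<Rightarrow> ('s \<Rightarrow> 'a \<Rightarrow> real)
    \<Rightarrow> ('s \<Rightarrow> 'a \<Rightarrow> real) \<Rightarrow> 's \<Rightarrow> 's \<Rightarrow> real" where
  "bisim_metric \<gamma> P R q = (THE d. bisim_fixed_point \<gamma> P R q d)"

definition bounded_env :: "('s::finite \<Rightarrow> 's \<Rightarrow> real) \<Rightarrow> real \<Rightarrow> bool" where
  "bounded_env d Dmax \<longleftrightarrow> (\<forall>s. (\<forall>s'. d s s' \<noteq> 0 \<longrightarrow> 1 \<le> d s s') \<and>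
      Dmax / 2 \<le> Max (range (d s)) \<and> Max (range (d s)) \<le> Dmax)"

definition deterministic :: "('s::finite \<Rightarrow> 'a \<Rightarrow> 's \<Rightarrow> real) \<Rightarrow> bool" where
  "deterministic P \<longleftrightarrow> (\<forall>s a. \<exists>s'. P s a s' = 1)"

end

theory Submission
  imports Defs
begin

text \<open>Consecutive GRADIENT stages sit at interpolation parameters at most \<Delta>\<alpha> apart on a
  constant-speed geodesic, so their Wasserstein distance is at most \<Delta>\<alpha> W(\<mu>, \<nu>); the bound
  m W(\<rho> k, \<rho> (k+1)) on the value gap then gives the claim.\<close>

definition constant_speed_geodesic :: "('s::finite \<Rightarrow> 's \<Rightarrow> real) \<Rightarrow> (real \<Rightarrow> 's \<Rightarrow> real) \<Rightarrow> bool" where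
  "constant_speed_geodesic d \<nu> \<longleftrightarrow> (\<forall>\<alpha>\<in>{0..1}. \<forall>\<beta>\<in>{0..1}.
      wasserstein d (\<nu> \<alpha>) (\<nu> \<beta>) = \<bar>\<alpha> - \<beta>\<bar> * wasserstein d (\<nu> 0) (\<nu> 1))"

lemma product_coupling_in_couplings:
  assumes "is_dist mu" "is_dist nu"
  shows "(\<lambda>s t. mu s * nu t) \<in> couplings mu nu"
  using assms
  by (simp add: couplings_def is_dist_def sum_distrib_left[symmetric] sum_distrib_right[symmetric])

lemma wasserstein_nonneg:
  fixes d :: "'s::finite \<Rightarrow> 's \<Rightarrow> real"
  assumes "\<And>s t. 0 \<le> d s t" "is_dist mu" "is_dist nu"
  shows "0 \<le> wasserstein d mu nu"
proof -
  have "couplings mu nu \<noteq> {}"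
    using product_coupling_in_couplings[OF assms(2,3)] by blast
  then show ?thesis
    unfolding wasserstein_def
    by (intro cInf_greatest) (auto simp: couplings_def assms(1) intro!: sum_nonneg)
qed

lemma bounded_env_nonneg:
  assumes "bounded_env d Dmax"
  shows "0 \<le> d s t"
  using assms unfolding bounded_env_def by (cases "d s t = 0") force+

lemma min_one_step_le:
  fixes h :: real
  assumes "0 \<le> h"
  shows "\<bar>min (real (Suc k) * h) 1 - min (real k * h) 1\<bar> \<le> h"
  using assms by (auto simp: min_def algebra_simps)

lemma geodesic_stage_distance_le:
  fixes d :: "'s::finite \<Rightarrow> 's \<Rightarrow> real"
  assumes geo: "constant_speed_geodesic d \<nu>"
    and W_nonneg: "0 \<le> wasserstein d (\<nu> 0) (\<nu> 1)"
    and h: "0 \<le> h"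
  shows "wasserstein d (\<nu> (min (real k * h) 1)) (\<nu> (min (real (Suc k) * h) 1))
           \<le> h * wasserstein d (\<nu> 0) (\<nu> 1)"
proof -
  let ?a = "min (real k * h) 1" and ?b = "min (real (Suc k) * h) 1"
  have "?a \<in> {0..1}" "?b \<in> {0..1}" using h by auto
  then have "wasserstein d (\<nu> ?a) (\<nu> ?b) = \<bar>?a - ?b\<bar> * wasserstein d (\<nu> 0) (\<nu> 1)"
    using geo unfolding constant_speed_geodesic_def by blast
  also have "\<dots> \<le> h * wasserstein d (\<nu> 0) (\<nu> 1)"
    using min_one_step_le[OF h, of k] W_nonneg by (simp add: abs_minus_commute mult_right_mono)
  finally show ?thesis .
qed

theorem corollary1:
  fixes P :: "'s::finite \<Rightarrow> 'a::finite \<Rightarrow> 's \<Rightarrow> real"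
    and R :: "'s \<Rightarrow> 'a \<Rightarrow> real"
    and \<gamma> :: real
    and C :: "'s set"
    and K :: nat
    and \<rho> :: "nat \<Rightarrow> 's \<Rightarrow> real"
    and \<pi>s :: "nat \<Rightarrow> 's \<Rightarrow> 'a \<Rightarrow> real"
    and \<pi>_star :: "'s \<Rightarrow> 'a \<Rightarrow> real"
    and d_star :: "'s \<Rightarrow> 's \<Rightarrow> real"
    and Dmax :: real
    and m :: real
    and \<nu> :: "real \<Rightarrow> 's \<Rightarrow> real"
    and \<Delta>\<alpha> :: real
  assumes gamma: "0 < \<gamma>" "\<gamma> < 1"
    and P_dist: "\<forall>s a. is_dist (P s a)"
    and R_range: "\<forall>s a. 0 \<le> R s a \<and> R s a \<le> 1 - \<gamma>"
    and C_ne: "C \<noteq> {}"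
    and stages: "\<forall>k\<le>K. is_dist (\<rho> k) \<and> supp (\<rho> k) \<subseteq> C"
    and pik_opt: "\<forall>k\<le>K. optimal_policy \<gamma> P R (\<rho> k) (\<pi>s k)"
    and pistar_opt: "optimal_policy \<gamma> P R (uniform_on C) \<pi>_star"
    and d_star_def: "d_star = bisim_metric \<gamma> P R \<pi>_star"
    and bounded: "bounded_env d_star Dmax"
    and determ: "deterministic P"
    and m_pos: "0 < m"
    and m_bound: "\<forall>k<K. mdp_value \<gamma> P R (\<pi>s (Suc k)) (\<rho> (Suc k)) - mdp_value \<gamma> P R (\<pi>s k) (\<rho> (Suc k))
                        \<le> m * wasserstein d_star (\<rho> k) (\<rho> (Suc k))"
    and geo_dist: "\<forall>\<alpha>\<in>{0..1}. is_dist (\<nu> \<alpha>) \<and> supp (\<nu> \<alpha>) \<subseteq> C"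
    and geo_speed: "\<forall>\<alpha>\<in>{0..1}. \<forall>\<beta>\<in>{0..1}.
          wasserstein d_star (\<nu> \<alpha>) (\<nu> \<beta>) = \<bar>\<alpha> - \<beta>\<bar> * wasserstein d_star (\<nu> 0) (\<nu> 1)"
    and da_pos: "0 < \<Delta>\<alpha>"
    and gradient: "\<forall>k\<le>K. \<rho> k = \<nu> (min (real k * \<Delta>\<alpha>) 1)"
  shows "\<forall>k<K. mdp_value \<gamma> P R (\<pi>s (Suc k)) (\<rho> (Suc k)) - mdp_value \<gamma> P R (\<pi>s k) (\<rho> (Suc k))
                \<le> m * \<Delta>\<alpha> * wasserstein d_star (\<nu> 0) (\<nu> 1)"
proof (intro allI impI)
  fix k assume k: "k < K"
  have W_nonneg: "0 \<le> wasserstein d_star (\<nu> 0) (\<nu> 1)"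
    using geo_dist by (intro wasserstein_nonneg bounded_env_nonneg[OF bounded]) auto
  have "constant_speed_geodesic d_star \<nu>"
    using geo_speed unfolding constant_speed_geodesic_def .
  then have "wasserstein d_star (\<rho> k) (\<rho> (Suc k)) \<le> \<Delta>\<alpha> * wasserstein d_star (\<nu> 0) (\<nu> 1)"
    using geodesic_stage_distance_le[OF _ W_nonneg] da_pos gradient k by simp
  then have "m * wasserstein d_star (\<rho> k) (\<rho> (Suc k)) \<le> m * \<Delta>\<alpha> * wasserstein d_star (\<nu> 0) (\<nu> 1)"
    using m_pos by (simp add: mult.assoc)
  then show "mdp_value \<gamma> P R (\<pi>s (Suc k)) (\<rho> (Suc k)) - mdp_value \<gamma> P R (\<pi>s k) (\<rho> (Suc k))
               \<le> m * \<Delta>\<alpha> * wasserstein d_star (\<nu> 0) (\<nu> 1)"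
    using m_bound k by (meson order_trans)
qed

end
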